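(* Consider the blown-up Kolmogorov-flow system described in the context. Substitute the expansions $\bar u=\sum_{j\ge0}u^{(j)}r^j$, $\bar v=\sum_{j\ge0}v^{(j)}r^j$, $\bar p=r\sum_{j\ge0}p^{(j)}r^j$ (all functions of $(\bar x,y,\bar t)$, $2\pi$-periodic in $y\in(-\pi,\pi)$, with $\int_{-\pi}^\pi u^{(j)}dy=0$) into the equations and match powers of $r$, treating $r^{-1}\partial_{\bar t}r$ and $\bar{\mathcal R}(\bar t)$ as order one. Then at leading order $v^{(0)}=A(\bar x,\bar t)$ and $u^{(0)}=-\sqrt2\cos y\,A(\bar x,\bar t)$ for a real function $A$, i.e. $(u^{(0)},v^{(0)})=A\boldsymbol\varphi$ with $\boldsymbol\varphi=(-\sqrt2\cos y,1)^\top$, and a necessary condition for solvability (periodicity in $y$ of $p^{(3)}$) of the order-$r^3$ pressure equation is that $$\partial_{\bar t}A=-r(\bar t)^{-1}\partial_{\bar t}r(\bar t)\,A-3\partial_{\bar x}^4A-\sqrt2\,\bar{\mathcal R}(\bar t)\partial_{\bar x}^2A+\tfrac23\partial_{\bar x}^2(A^3).$$ Consequently, in charts (with $\beta=4$): $\mathcal K_1:\ \partial_{t_1}A_1=\tfrac{\varepsilon_1(t_1)}{2}A_1-3\partial_{x_1}^4A_1+\sqrt2\partial_{x_1}^2A_1+\tfrac23\partial_{x_1}^2(A_1^3)$; $\mathcal K_2:\ \partial_{t_2}A_2=-3\partial_{x_2}^4A_2-\sqrt2\mathcal R_2(t_2)\partial_{x_2}^2A_2+\tfrac23\partial_{x_2}^2(A_2^3)$;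 $\mathcal K_3:\ \partial_{t_3}A_3=-\tfrac{\varepsilon_3(t_3)}{2}A_3-3\partial_{x_3}^4A_3-\sqrt2\partial_{x_3}^2A_3+\tfrac23\partial_{x_3}^2(A_3^3)$, with $\varepsilon_1(t_1)=\frac{2\varepsilon_1(0)}{2-6\varepsilon_1(0)t_1}$, $\mathcal R_2(t_2)=\mathcal R_2(0)+t_2$, $\varepsilon_3(t_3)=\frac{2\varepsilon_3(0)}{2+6\varepsilon_3(0)t_3}$.
   Context: The underlying problem is the planar incompressible Navier–Stokes flow with Kolmogorov forcing and slowly increasing Reynolds number, on $(x,y)\in\mathbb R\times(-\pi,\pi)$ with periodic boundary conditions in $y$: for the perturbation $\mathbf U'=(u',v')$ of the basic flow $(\mathcal R\sin y,0)$ and pressure perturbation $p'$, $\partial_t\mathbf U'=-(\mathbf U'\cdot\nabla)\mathbf U'-\nabla p'+\Delta\mathbf U'-(\mathcal R'+\sqrt2)W\mathbf U'+\varepsilon(-\sin y,0)^\top$, $\dot{\mathcal R}'=\varepsilon$, where $W=\begin{pmatrix}\sin y\,\partial_x&\cos y\\0&\sin y\,\partial_x\end{pmatrix}$, $\mathcal R'=\mathcal R-\sqrt2$, with $\nabla\cdot\mathbf U'=0$ and zero mean flow $\int_{-\pi}^\pi u'\,dy=0$. The blow-up (with $\beta=4$) is $(\mathbf U',p')=r(\bar t)(\bar u,\bar v,\bar p)(\bar x,y,\bar t)$, $\mathcal R'=r^2\bar{\mathcal R}$, $\varepsilon=r^6\bar\varepsilon$, $(\bar{\mathcal R},\bar\varepsilon)\in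 S^1$, $\partial_x=r\partial_{\bar x}$, $\partial_t=r^4\partial_{\bar t}$ ($y$ is not rescaled). The resulting blown-up equations are $\partial_y\bar v=-r\partial_{\bar x}\bar u$, $\partial_y^2\bar u=\sqrt2\cos y\,\bar v+(\sqrt2\sin y\,\partial_{\bar x}\bar u+\bar v\partial_y\bar u)r+(\bar u\partial_{\bar x}\bar u-\partial_{\bar x}^2\bar u+\partial_{\bar x}\bar p+\bar{\mathcal R}\bar v\cos y)r^2+\bar{\mathcal R}\sin y\,\partial_{\bar x}\bar u\,r^3+(\partial_{\bar t}\bar u+r^{-1}\bar u\partial_{\bar t}r)r^4+\bar\varepsilon\sin y\,r^5$, $\partial_y\bar p=-\partial^2_{\bar xy}\bar u-\sqrt2\sin y\,\partial_{\bar x}\bar v-\bar v\partial_y\bar v+(-\bar u\partial_{\bar x}\bar v+\partial_{\bar x}^2\bar v)r-\bar{\mathcal R}\sin y\,\partial_{\bar x}\bar v\,r^2-(\partial_{\bar t}\bar v+\bar vr^{-1}\partial_{\bar t}r)r^3$, together with $\int_{-\pi}^\pi\bar u\,dy=0$. Charts: $\mathcal K_1$: $\bar{\mathcal R}=-1$, $\varepsilon=r_1^6\varepsilon_1$, $\dot r_1=-\tfrac12r_1\varepsilon_1$, $\dot\varepsilon_1=3\varepsilon_1^2$; $\mathcal K_2$: $\bar\varepsilon=1$, $\mathcal R'=r_2^2\mathcal R_2$, $\dot r_2=0$, $\dot{\mathcal R}_2=1$; $\mathcal K_3$: $\bar{\mathcal R}=1$, $\varepsilon=r_3^6\varepsilon_3$,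 $\dot r_3=\tfrac12r_3\varepsilon_3$, $\dot\varepsilon_3=-3\varepsilon_3^2$; $t_l,x_l,A_l$ denote desingularized time, space and amplitude in chart $\mathcal K_l$. *)

theory Defs
  imports "HOL-Analysis.Analysis"
begin

text \<open>Fields on (x, y, t) in R x R x T: first argument is the rescaled
  horizontal variable xbar, second the (unrescaled, 2pi-periodic) y, third
  the rescaled time tbar.\<close>

type_synonym fld = "real \<Rightarrow> real \<Rightarrow> real \<Rightarrow> real"

definition Dx :: "fld \<Rightarrow> fld" where
  "Dx f = (\<lambda>x y t. deriv (\<lambda>\<xi>. f \<xi> y t) x)"

definition Dy :: "fld \<Rightarrow> fld" where
  "Dy f = (\<lambda>x y t. deriv (\<lambda>\<eta>. f x \<eta> t) y)"

definition Dt :: "fld \<Rightarrow> fld" where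
  "Dt f = (\<lambda>x y t. deriv (\<lambda>\<tau>. f x y \<tau>) t)"

fun iterD :: "nat list \<Rightarrow> fld \<Rightarrow> fld" where
  "iterD [] f = f"
| "iterD (d # ds) f = (if d = 0 then Dx else if d = 1 then Dy else Dt) (iterD ds f)"

definition smooth3 :: "real set \<Rightarrow> fld \<Rightarrow> bool" where
  "smooth3 T f \<longleftrightarrow>
     (\<forall>ds. continuous_on (UNIV \<times> UNIV \<times> T) (\<lambda>(x, y, t). iterD ds f x y t) \<and>
        (\<forall>x y t. t \<in> T \<longrightarrow>
            (\<lambda>\<xi>. iterD ds f \<xi> y t) differentiable (at x) \<and>
            (\<lambda>\<eta>. iterD ds f x \<eta> t) differentiable (at y) \<and>
            (\<lambda>\<tau>. iterD ds f x y \<tau>) differentiable (at t)))"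

definition lag :: "(nat \<Rightarrow> fld) \<Rightarrow> nat \<Rightarrow> nat \<Rightarrow> fld" where
  "lag f j k = (if k \<le> j then f (j - k) else (\<lambda>x y t. 0))"

text \<open>The hierarchy obtained by inserting ubar = sum u^(j) r^j, vbar = sum v^(j) r^j,
  pbar = r sum p^(j) r^j into the blown-up equations and matching the coefficient of
  r^j, with rho = r^{-1} d r/dtbar, Rb = Rbar(tbar), eb = epsbar(tbar) treated as
  order one.  (Continuity equation, u-equation, pressure equation.)\<close>
definition kf_hierarchy ::
  "real set \<Rightarrow> (real \<Rightarrow> real) \<Rightarrow> (real \<Rightarrow> real) \<Rightarrow> (real \<Rightarrow> real)
   \<Rightarrow> (nat \<Rightarrow> fld) \<Rightarrow> (nat \<Rightarrow> fld) \<Rightarrow> (nat \<Rightarrow> fld) \<Rightarrow> bool" where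
  "kf_hierarchy T r Rb eb u v p \<longleftrightarrow>
     (\<forall>t\<in>T. r t > 0 \<and> r differentiable (at t)) \<and>
     (\<forall>j. smooth3 T (u j) \<and> smooth3 T (v j) \<and> smooth3 T (p j)) \<and>
     (\<forall>j x y t. t \<in> T \<longrightarrow>
        u j x (y + 2 * pi) t = u j x y t \<and>
        v j x (y + 2 * pi) t = v j x y t \<and>
        p j x (y + 2 * pi) t = p j x y t) \<and>
     (\<forall>j x t. t \<in> T \<longrightarrow> integral {-pi..pi} (\<lambda>y. u j x y t) = 0) \<and>
     (\<forall>j x y t. t \<in> T \<longrightarrow>
        Dy (v j) x y t = - Dx (lag u j 1) x y t \<and>
        Dy (Dy (u j)) x y t =
            sqrt 2 * cos y * v j x y t
          + sqrt 2 * sin y * Dx (lag u j 1) x y t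
          + (\<Sum>k<j. v k x y t * Dy (u (j - 1 - k)) x y t)
          + (\<Sum>k<j - 1. u k x y t * Dx (u (j - 2 - k)) x y t)
          - Dx (Dx (lag u j 2)) x y t
          + Dx (lag p j 2) x y t
          + Rb t * lag v j 2 x y t * cos y
          + Rb t * sin y * Dx (lag u j 3) x y t
          + (Dt (lag u j 4) x y t + lag u j 4 x y t * (deriv r t / r t))
          + (if j = 5 then eb t * sin y else 0) \<and>
        Dy (p j) x y t =
            - Dy (Dx (u j)) x y t
          - sqrt 2 * sin y * Dx (v j) x y t
          - (\<Sum>k\<le>j. v k x y t * Dy (v (j - k)) x y t)
          + (- (\<Sum>k<j. u k x y t * Dx (v (j - 1 - k)) x y t) + Dx (Dx (lag v j 1)) x y t)
          - Rb t * sin y * Dx (lag v j 2) x y t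
          - (Dt (lag v j 3) x y t + lag v j 3 x y t * (deriv r t / r t)))"

definition leading_order :: "real set \<Rightarrow> (nat \<Rightarrow> fld) \<Rightarrow> (nat \<Rightarrow> fld) \<Rightarrow> (real \<Rightarrow> real \<Rightarrow> real) \<Rightarrow> bool" where
  "leading_order T u v A \<longleftrightarrow>
     (\<forall>x y t. t \<in> T \<longrightarrow> v 0 x y t = A x t \<and> u 0 x y t = - sqrt 2 * cos y * A x t)"

end

theory Submission
  imports Defs
begin

text \<open>At every order in r the hierarchy consists of linear ODEs in the periodic variable y whose
  right-hand sides are trigonometric polynomials of degree at most two built from lower orders.
  Periodicity in y and the zero mean of u fix all constants of integration up to functions of x
  and t, so the profiles u0 = - sqrt 2 A cos y, v0 = A and explicit formulas up to v3 follow order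
  by order. The correction p3 is periodic only if the y-mean of the right-hand side of its equation
  vanishes; computing that mean exactly gives the amplitude equation. In the charts, (dr/dt)/r is
  read off from the chart ODEs, and the Riccati equations for eps1 and eps3 are integrated
  explicitly, uniqueness coming from a Gronwall estimate.\<close>

section \<open>Partial derivatives of smooth fields\<close>

lemma smooth3_DERIV_Dx:
  assumes "smooth3 T f" "t \<in> T"
  shows "((\<lambda>\<xi>. iterD ds f \<xi> y t) has_real_derivative Dx (iterD ds f) x y t) (at x)"
  using assms unfolding smooth3_def Dx_def by (simp add: DERIV_deriv_iff_real_differentiable)

lemma smooth3_DERIV_Dy:
  assumes "smooth3 T f" "t \<in> T"
  shows "((\<lambda>\<eta>. iterD ds f x \<eta> t) has_real_derivative Dy (iterD ds f) x y t) (at y)"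
  using assms unfolding smooth3_def Dy_def by (simp add: DERIV_deriv_iff_real_differentiable)

lemma smooth3_DERIV_Dt:
  assumes "smooth3 T f" "t \<in> T"
  shows "((\<lambda>\<tau>. iterD ds f x y \<tau>) has_real_derivative Dt (iterD ds f) x y t) (at t)"
  using assms unfolding smooth3_def Dt_def by (simp add: DERIV_deriv_iff_real_differentiable)

lemma Dx_eqI:
  assumes "\<And>\<xi>. f \<xi> y t = F \<xi>" "(F has_real_derivative D) (at x)"
  shows "Dx f x y t = D"
  using assms by (simp add: Dx_def DERIV_imp_deriv)

lemma Dy_eqI:
  assumes "\<And>\<eta>. f x \<eta> t = F \<eta>" "(F has_real_derivative D) (at y)"
  shows "Dy f x y t = D"
  using assms by (simp add: Dy_def DERIV_imp_deriv)

lemma Dx_zero [simp]: "Dx (\<lambda>x y t. 0) = (\<lambda>x y t. 0)"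
  by (simp add: Dx_def)

lemma Dt_zero [simp]: "Dt (\<lambda>x y t. 0) = (\<lambda>x y t. 0)"
  by (simp add: Dt_def)

definition x_tower :: "fld \<Rightarrow> real \<Rightarrow> nat \<Rightarrow> real \<Rightarrow> real" where
  "x_tower f t n \<xi> = iterD (replicate n 0) f \<xi> 0 t"

lemma x_tower_0: "x_tower f t 0 x = f x 0 t"
  by (simp add: x_tower_def)

lemma funpow_deriv_x_tower: "(deriv ^^ n) (x_tower f t 0) = x_tower f t n"
  by (induction n) (auto simp: x_tower_def Dx_def)

lemma x_tower_DERIV:
  assumes "smooth3 T f" "t \<in> T"
  shows "(x_tower f t n has_real_derivative x_tower f t (Suc n) x) (at x within S)"
  using smooth3_DERIV_Dx[OF assms, of "replicate n 0" 0 x]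
  by (simp add: x_tower_def[abs_def] has_field_derivative_at_within)

lemma funpow2_deriv_cube:
  fixes f :: "real \<Rightarrow> real"
  assumes f': "\<And>\<xi>. (f has_real_derivative f' \<xi>) (at \<xi>)"
    and f'': "\<And>\<xi>. (f' has_real_derivative f'' \<xi>) (at \<xi>)"
  shows "(deriv ^^ 2) (\<lambda>\<xi>. (f \<xi>) ^ 3) x = 6 * f x * (f' x)\<^sup>2 + 3 * (f x)\<^sup>2 * f'' x"
proof -
  have "deriv (\<lambda>\<xi>. (f \<xi>) ^ 3) = (\<lambda>\<xi>. 3 * (f \<xi>)\<^sup>2 * f' \<xi>)"
    by (rule ext, rule DERIV_imp_deriv) (auto intro!: derivative_eq_intros f' simp: power2_eq_square)
  moreover have "deriv (\<lambda>\<xi>. 3 * (f \<xi>)\<^sup>2 * f' \<xi>) x = 6 * f x * (f' x)\<^sup>2 + 3 * (f x)\<^sup>2 * f'' x"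
    by (rule DERIV_imp_deriv) (auto intro!: derivative_eq_intros f' f'' simp: power2_eq_square)
  ultimately show ?thesis
    by (simp add: numeral_2_eq_2)
qed

section \<open>Periodic ODEs in one variable\<close>

lemma has_integral_DERIV_real:
  fixes F f :: "real \<Rightarrow> real"
  assumes "a \<le> b" "\<And>x. (F has_real_derivative f x) (at x)"
  shows "(f has_integral (F b - F a)) {a..b}"
  using assms by (intro fundamental_theorem_of_calculus)
    (auto simp: has_real_derivative_iff_has_vector_derivative[symmetric] has_field_derivative_at_within)

lemma periodic_primitive_trig:
  fixes g :: "real \<Rightarrow> real"
  assumes g': "\<And>\<eta>. (g has_real_derivative a * cos \<eta> + b * sin \<eta> + c) (at \<eta>)"
    and periodic: "g (2 * pi) = g 0"
  shows "c = 0" and "g y = a * sin y - b * cos y + (g 0 + b)"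
proof -
  define h where "h \<eta> = g \<eta> - a * sin \<eta> + b * cos \<eta> - c * \<eta>" for \<eta>
  have "(h has_real_derivative 0) (at \<eta>)" for \<eta>
    unfolding h_def[abs_def] by (auto intro!: derivative_eq_intros g')
  then have h_const: "h z = h 0" for z
    using DERIV_isconst_all by blast
  from h_const[of "2 * pi"] periodic show c0: "c = 0"
    by (simp add: h_def)
  from h_const[of y] c0 show "g y = a * sin y - b * cos y + (g 0 + b)"
    by (simp add: h_def)
qed

text \<open>A periodic function with zero mean is determined by its second derivative: the periodicity
  of g and g' kills the constant and the secular terms, the mean kills the constant of integration.\<close>
lemma periodic_mean_zero_second_primitive_trig:
  fixes g g' :: "real \<Rightarrow> real"
  assumes g': "\<And>\<eta>. (g has_real_derivative g' \<eta>) (at \<eta>)"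
    and g'': "\<And>\<eta>. (g' has_real_derivative a * cos \<eta> + b * sin \<eta> + c) (at \<eta>)"
    and periodic: "\<And>y. g (y + 2 * pi) = g y"
    and mean_zero: "(g has_integral 0) {-pi..pi}"
  shows "g y = - a * cos y - b * sin y"
proof -
  have "((\<lambda>\<eta>. g (\<eta> + 2 * pi)) has_real_derivative g' (0 + 2 * pi) * 1) (at 0)"
    by (rule DERIV_chain2[OF g']) (auto intro!: derivative_eq_intros)
  then have "(g has_real_derivative g' (2 * pi)) (at 0)"
    using periodic by simp
  then have "g' (2 * pi) = g' 0"
    using g'[of 0] DERIV_unique by blast
  note g'_eq = periodic_primitive_trig[OF g'' this]
  have g'_trig: "(g has_real_derivative (- b) * cos \<eta> + a * sin \<eta> + (g' 0 + b)) (at \<eta>)" for \<eta>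
    using g'[of \<eta>] g'_eq(2)[of \<eta>] by simp
  define M where "M = g 0 + a"
  have g_eq: "g z = M - a * cos z - b * sin z" for z
    using periodic_primitive_trig(2)[OF g'_trig, of z] periodic[of 0] unfolding M_def by simp
  have "((\<lambda>z. M - a * cos z - b * sin z) has_integral
      ((M * pi - a * sin pi + b * cos pi) - (M * (-pi) - a * sin (-pi) + b * cos (-pi)))) {-pi..pi}"
    by (rule has_integral_DERIV_real) (auto intro!: derivative_eq_intros)
  moreover have "g = (\<lambda>z. M - a * cos z - b * sin z)"
    using g_eq by blast
  ultimately have "(g has_integral 2 * pi * M) {-pi..pi}"
    by (simp add: algebra_simps)
  from has_integral_unique[OF mean_zero this] have "M = 0"
    by simp
  then show ?thesis
    using g_eq by simp
qed

section \<open>Trigonometric quadratics\<close>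

definition trig_linear :: "(real \<Rightarrow> real) \<Rightarrow> bool" where
  "trig_linear f \<longleftrightarrow> (\<exists>a b c. \<forall>y. f y = a + b * cos y + c * sin y)"

definition trig_quadratic :: "(real \<Rightarrow> real) \<Rightarrow> bool" where
  "trig_quadratic f \<longleftrightarrow> (\<exists>a b c d e h. \<forall>y.
     f y = a + b * cos y + c * sin y + d * (cos y)\<^sup>2 + e * (sin y)\<^sup>2 + h * (sin y * cos y))"

lemma trig_linearI: "(\<And>y. f y = a + b * cos y + c * sin y) \<Longrightarrow> trig_linear f"
  unfolding trig_linear_def by blast

lemma trig_quadraticI:
  "(\<And>y. f y = a + b * cos y + c * sin y + d * (cos y)\<^sup>2 + e * (sin y)\<^sup>2 + h * (sin y * cos y))
   \<Longrightarrow> trig_quadratic f"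
  unfolding trig_quadratic_def by blast

lemma trig_linear_const: "trig_linear (\<lambda>y. k)"
  by (rule trig_linearI[of _ k 0 0]) simp

lemma trig_linear_cos: "trig_linear cos"
  by (rule trig_linearI[of _ 0 1 0]) simp

lemma trig_linear_sin: "trig_linear sin"
  by (rule trig_linearI[of _ 0 0 1]) simp

lemma trig_linear_add:
  assumes "trig_linear f" "trig_linear g"
  shows "trig_linear (\<lambda>y. f y + g y)"
proof -
  obtain a b c a' b' c' where "\<And>y. f y = a + b * cos y + c * sin y"
    and "\<And>y. g y = a' + b' * cos y + c' * sin y"
    using assms unfolding trig_linear_def by blast
  then show ?thesis
    by (intro trig_linearI[of _ "a + a'" "b + b'" "c + c'"]) (simp add: algebra_simps)
qed

lemma trig_linear_cmult:
  assumes "trig_linear f"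
  shows "trig_linear (\<lambda>y. k * f y)"
proof -
  obtain a b c where "\<And>y. f y = a + b * cos y + c * sin y"
    using assms unfolding trig_linear_def by blast
  then show ?thesis
    by (intro trig_linearI[of _ "k * a" "k * b" "k * c"]) (simp add: algebra_simps)
qed

lemma trig_linear_minus: "trig_linear f \<Longrightarrow> trig_linear (\<lambda>y. - f y)"
  using trig_linear_cmult[of f "- 1"] by simp

lemma trig_linear_diff: "trig_linear f \<Longrightarrow> trig_linear g \<Longrightarrow> trig_linear (\<lambda>y. f y - g y)"
  using trig_linear_add[of f "\<lambda>y. - g y"] trig_linear_minus[of g] by simp

lemma trig_quadratic_linear:
  assumes "trig_linear f"
  shows "trig_quadratic f"
proof -
  obtain a b c where "\<And>y. f y = a + b * cos y + c * sin y"
    using assms unfolding trig_linear_def by blast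
  then show ?thesis
    by (intro trig_quadraticI[of _ a b c 0 0 0]) simp
qed

lemma trig_quadratic_add:
  assumes "trig_quadratic f" "trig_quadratic g"
  shows "trig_quadratic (\<lambda>y. f y + g y)"
proof -
  obtain a b c d e h a' b' c' d' e' h' where
    "\<And>y. f y = a + b * cos y + c * sin y + d * (cos y)\<^sup>2 + e * (sin y)\<^sup>2 + h * (sin y * cos y)"
    "\<And>y. g y = a' + b' * cos y + c' * sin y + d' * (cos y)\<^sup>2 + e' * (sin y)\<^sup>2 + h' * (sin y * cos y)"
    using assms unfolding trig_quadratic_def by blast
  then show ?thesis
    by (intro trig_quadraticI[of _ "a + a'" "b + b'" "c + c'" "d + d'" "e + e'" "h + h'"])
      (simp add: algebra_simps)
qed

lemma trig_quadratic_cmult: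
  assumes "trig_quadratic f"
  shows "trig_quadratic (\<lambda>y. k * f y)"
proof -
  obtain a b c d e h where
    "\<And>y. f y = a + b * cos y + c * sin y + d * (cos y)\<^sup>2 + e * (sin y)\<^sup>2 + h * (sin y * cos y)"
    using assms unfolding trig_quadratic_def by blast
  then show ?thesis
    by (intro trig_quadraticI[of _ "k * a" "k * b" "k * c" "k * d" "k * e" "k * h"])
      (simp add: algebra_simps)
qed

lemma trig_quadratic_minus: "trig_quadratic f \<Longrightarrow> trig_quadratic (\<lambda>y. - f y)"
  using trig_quadratic_cmult[of f "- 1"] by simp

lemma trig_quadratic_diff:
  "trig_quadratic f \<Longrightarrow> trig_quadratic g \<Longrightarrow> trig_quadratic (\<lambda>y. f y - g y)"
  using trig_quadratic_add[of f "\<lambda>y. - g y"] trig_quadratic_minus[of g] by simp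

lemma trig_quadratic_mult:
  assumes "trig_linear f" "trig_linear g"
  shows "trig_quadratic (\<lambda>y. f y * g y)"
proof -
  obtain a b c a' b' c' where "\<And>y. f y = a + b * cos y + c * sin y"
    and "\<And>y. g y = a' + b' * cos y + c' * sin y"
    using assms unfolding trig_linear_def by blast
  then show ?thesis
    by (intro trig_quadraticI[of _ "a * a'" "a * b' + b * a'" "a * c' + c * a'" "b * b'" "c * c'"
          "b * c' + c * b'"])
      (simp add: algebra_simps power2_eq_square)
qed

lemmas trig_quadratic_intros =
  trig_quadratic_add trig_quadratic_diff trig_quadratic_minus trig_quadratic_mult
  trig_quadratic_cmult trig_quadratic_linear
  trig_linear_add trig_linear_diff trig_linear_minus trig_linear_cmult
  trig_linear_const trig_linear_cos trig_linear_sin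

text \<open>The four-point rule at the quarter periods integrates trigonometric polynomials of degree
  at most two exactly, because it annihilates cos, sin, cos 2y and sin 2y.\<close>
lemma trig_quadratic_has_integral:
  assumes "trig_quadratic f"
  shows "(f has_integral pi / 2 * (f 0 + f pi + f (pi / 2) + f (- pi / 2))) {-pi..pi}"
proof -
  obtain a b c d e h where f:
    "\<And>y. f y = a + b * cos y + c * sin y + d * (cos y)\<^sup>2 + e * (sin y)\<^sup>2 + h * (sin y * cos y)"
    using assms unfolding trig_quadratic_def by blast
  define F where "F y = a * y + b * sin y - c * cos y + d * (y / 2 + sin y * cos y / 2)
     + e * (y / 2 - sin y * cos y / 2) + h * ((sin y)\<^sup>2 / 2)" for y
  have "(F has_real_derivative f y) (at y)" for y
  proof -
    have "(F has_real_derivative a + b * cos y + c * sin y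
        + d * (1 / 2 + (cos y * cos y - sin y * sin y) / 2)
        + e * (1 / 2 - (cos y * cos y - sin y * sin y) / 2) + h * (sin y * cos y)) (at y)"
      unfolding F_def[abs_def]
      by (auto intro!: derivative_eq_intros simp: power2_eq_square field_simps)
    moreover have "a + b * cos y + c * sin y + d * (1 / 2 + (cos y * cos y - sin y * sin y) / 2)
        + e * (1 / 2 - (cos y * cos y - sin y * sin y) / 2) + h * (sin y * cos y) = f y"
      unfolding f using sin_cos_squared_add[of y] unfolding power2_eq_square by algebra
    ultimately show ?thesis
      by simp
  qed
  then have "(f has_integral F pi - F (- pi)) {-pi..pi}"
    by (intro has_integral_DERIV_real) auto
  moreover have "F pi - F (- pi) = pi / 2 * (f 0 + f pi + f (pi / 2) + f (- pi / 2))"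
    unfolding F_def f by (simp add: algebra_simps)
  ultimately show ?thesis
    by simp
qed

section \<open>Scalar ODEs on intervals\<close>

text \<open>Gronwall: for B > 2 sup |k| the functions w^2 exp(-B t) and w^2 exp(B t) are monotone.\<close>
lemma linear_ode_zero_segment:
  fixes w k :: "real \<Rightarrow> real"
  assumes "a \<le> b"
    and w': "\<And>\<tau>. a \<le> \<tau> \<Longrightarrow> \<tau> \<le> b \<Longrightarrow> (w has_real_derivative k \<tau> * w \<tau>) (at \<tau>)"
    and k_bound: "\<And>\<tau>. a \<le> \<tau> \<Longrightarrow> \<tau> \<le> b \<Longrightarrow> \<bar>k \<tau>\<bar> \<le> M"
  shows "w a = 0 \<Longrightarrow> w b = 0" and "w b = 0 \<Longrightarrow> w a = 0"
proof -
  define B where "B = 2 * M + 1"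
  have B: "2 * k \<tau> < B" "- B < 2 * k \<tau>" if "a \<le> \<tau>" "\<tau> \<le> b" for \<tau>
    using k_bound[OF that] unfolding B_def by auto
  define z where "z s \<tau> = (w \<tau>)\<^sup>2 * exp (s * B * \<tau>)" for s \<tau>
  have z': "(z s has_real_derivative (2 * k \<tau> + s * B) * z s \<tau>) (at \<tau>)"
    if "a \<le> \<tau>" "\<tau> \<le> b" for s \<tau>
    unfolding z_def[abs_def]
    by (auto intro!: derivative_eq_intros w'[OF that] simp: algebra_simps power2_eq_square)
  have z_nonneg: "0 \<le> z s \<tau>" for s \<tau>
    by (simp add: z_def)
  have z_zero: "w \<tau> = 0" if "z s \<tau> \<le> 0" for s \<tau>
    using that by (simp add: z_def mult_le_0_iff)
  show "w b = 0" if "w a = 0"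
  proof -
    have "\<exists>y. (z (- 1) has_real_derivative y) (at \<tau>) \<and> y \<le> 0" if "a \<le> \<tau>" "\<tau> \<le> b" for \<tau>
      using z'[OF that, of "- 1"] B[OF that] z_nonneg[of "- 1" \<tau>]
      by (intro exI[of _ "(2 * k \<tau> - B) * z (- 1) \<tau>"]) (simp add: mult_nonpos_nonneg)
    then have "z (- 1) b \<le> z (- 1) a"
      by (rule DERIV_nonpos_imp_nonincreasing[OF \<open>a \<le> b\<close>])
    with \<open>w a = 0\<close> show ?thesis
      by (intro z_zero[of "- 1"]) (simp add: z_def)
  qed
  show "w a = 0" if "w b = 0"
  proof -
    have "\<exists>y. (z 1 has_real_derivative y) (at \<tau>) \<and> y \<ge> 0" if "a \<le> \<tau>" "\<tau> \<le> b" for \<tau>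
      using z'[OF that, of 1] B[OF that] z_nonneg[of 1 \<tau>]
      by (intro exI[of _ "(2 * k \<tau> + B) * z 1 \<tau>"]) simp
    then have "z 1 a \<le> z 1 b"
      by (rule DERIV_nonneg_imp_nondecreasing[OF \<open>a \<le> b\<close>])
    with \<open>w b = 0\<close> show ?thesis
      by (intro z_zero[of 1]) (simp add: z_def)
  qed
qed

lemma linear_ode_zero:
  fixes w k :: "real \<Rightarrow> real"
  assumes T: "is_interval T" "0 \<in> T" "t \<in> T"
    and w': "\<And>\<tau>. \<tau> \<in> T \<Longrightarrow> (w has_real_derivative k \<tau> * w \<tau>) (at \<tau>)"
    and "continuous_on T k" and "w 0 = 0"
  shows "w t = 0"
proof -
  define I where "I = {min 0 t..max 0 t}"
  have I_sub: "I \<subseteq> T"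
  proof
    fix \<tau> assume "\<tau> \<in> I"
    then have "min 0 t \<le> \<tau>" "\<tau> \<le> max 0 t"
      unfolding I_def by auto
    moreover have "min 0 t \<in> T" "max 0 t \<in> T"
      using T by (auto simp: min_def max_def)
    ultimately show "\<tau> \<in> T"
      using T(1) unfolding is_interval_1 by blast
  qed
  have "compact (k ` I)"
    unfolding I_def using continuous_on_subset[OF \<open>continuous_on T k\<close> I_sub[unfolded I_def]]
    by (rule compact_continuous_image) simp
  then have "bounded (k ` I)"
    by (rule compact_imp_bounded)
  then obtain M where M: "\<And>\<tau>. \<tau> \<in> I \<Longrightarrow> \<bar>k \<tau>\<bar> \<le> M"
    unfolding bounded_real by auto
  have I_mem: "\<tau> \<in> I" if "min 0 t \<le> \<tau>" "\<tau> \<le> max 0 t" for \<tau>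
    using that unfolding I_def by simp
  note segment = linear_ode_zero_segment[of "min 0 t" "max 0 t" w k M,
      OF _ w'[OF subsetD[OF I_sub I_mem]] M[OF I_mem]]
  show ?thesis
  proof (cases "0 \<le> t")
    case True
    then show ?thesis
      using segment(1) \<open>w 0 = 0\<close> by simp
  next
    case False
    then show ?thesis
      using segment(2) \<open>w 0 = 0\<close> by simp
  qed
qed

lemma riccati_solution:
  fixes e :: "real \<Rightarrow> real"
  assumes T: "is_interval T" "0 \<in> T" "t \<in> T"
    and e': "\<And>\<tau>. \<tau> \<in> T \<Longrightarrow> (e has_real_derivative c * (e \<tau>)\<^sup>2) (at \<tau>)"
  shows "e t = e 0 / (1 - c * e 0 * t)"
proof -
  \<comment> \<open>w vanishes on the explicit solution and obeys the linear equation w' = c e w.\<close>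
  define w where "w \<tau> = e \<tau> * (1 - c * e 0 * \<tau>) - e 0" for \<tau>
  have w': "(w has_real_derivative c * e \<tau> * w \<tau>) (at \<tau>)" if "\<tau> \<in> T" for \<tau>
    unfolding w_def[abs_def]
    by (auto intro!: derivative_eq_intros e'[OF that] simp: algebra_simps power2_eq_square)
  have "continuous_on T e"
    using e' DERIV_continuous continuous_at_imp_continuous_on by blast
  then have "continuous_on T (\<lambda>\<tau>. c * e \<tau>)"
    by (intro continuous_intros)
  moreover have "w 0 = 0"
    by (simp add: w_def)
  ultimately have "w t = 0"
    using linear_ode_zero[OF T w'] by blast
  then have e_t: "e t * (1 - c * e 0 * t) = e 0"
    by (simp add: w_def)
  moreover have "1 - c * e 0 * t \<noteq> 0"
  proof
    assume d0: "1 - c * e 0 * t = 0"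
    with e_t have "e 0 = 0"
      by (metis mult_zero_right)
    with d0 show False
      by simp
  qed
  ultimately show ?thesis
    by (metis nonzero_eq_divide_eq)
qed

section \<open>The hierarchy order by order\<close>

lemma periodic_field_from_Dy:
  assumes "smooth3 T f" "t \<in> T" "\<And>y. f x (y + 2 * pi) t = f x y t"
    and Dy_f: "\<And>\<eta>. Dy f x \<eta> t = a * cos \<eta> + b * sin \<eta> + c"
  shows "f x y t = a * sin y - b * cos y + (f x 0 t + b)"
proof (rule periodic_primitive_trig(2))
  show "((\<lambda>\<eta>. f x \<eta> t) has_real_derivative a * cos \<eta> + b * sin \<eta> + c) (at \<eta>)" for \<eta>
    using smooth3_DERIV_Dy[OF assms(1,2), of "[]" x] Dy_f by simp
  show "f x (2 * pi) t = f x 0 t"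
    using assms(3)[of 0] by simp
qed

lemma lag_eq_zero [simp]: "j < k \<Longrightarrow> lag f j k = (\<lambda>x y t. 0)"
  by (simp add: lag_def)

lemma lag_eq [simp]: "k \<le> j \<Longrightarrow> lag f j k = f (j - k)"
  by (simp add: lag_def)

lemma sqrt2_sqrt2: "sqrt 2 * sqrt 2 = (2 :: real)"
  by simp

text \<open>After normalisation with algebra_simps equal factors are adjacent, so this rule is enough
  to eliminate sqrt 2 * sqrt 2 from products.\<close>
lemma sqrt2_sqrt2_mult: "sqrt 2 * (sqrt 2 * z) = 2 * (z :: real)"
  by (simp add: mult.assoc[symmetric])

text \<open>The algebra behind the second-order profile of u: s stands for sqrt 2 and (n, c) for
  (sin y, cos y); the identity is checked modulo s * s = 2 and n * n + c * c = 1.\<close>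
lemma u2_momentum_identity:
  fixes s c n a0 a1 a2 b0 b1 m p1 R :: real
  assumes s: "s * s = 2" and nc: "n * n + c * c = 1"
  shows "s * c * (s * b1 * n - 2 * s * a0 * a1 * c + m)
      + s * n * (- s * b1 * c - 2 * s * a0 * a1 * n)
      + (a0 * (s * b0 * n - s * a0\<^sup>2 * c) + (s * a1 * n + b0) * (s * a0 * n))
      + (- s * a0 * c) * (- s * a1 * c)
      - (- s * a2 * c)
      + (2 * s * a2 * c + (p1 - 2 * s * a2))
      + R * a0 * c
    = (s * m - s * a0 ^ 3 + 3 * s * a2 + R * a0) * c + (2 * s * a0 * b0) * n
      + (p1 - 2 * s * a2 - 2 * a0 * a1)"
proof -
  have "s * c * (s * b1 * n - 2 * s * a0 * a1 * c + m)
      + s * n * (- s * b1 * c - 2 * s * a0 * a1 * n)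
      + (a0 * (s * b0 * n - s * a0\<^sup>2 * c) + (s * a1 * n + b0) * (s * a0 * n))
      + (- s * a0 * c) * (- s * a1 * c)
      - (- s * a2 * c)
      + (2 * s * a2 * c + (p1 - 2 * s * a2))
      + R * a0 * c
    - ((s * m - s * a0 ^ 3 + 3 * s * a2 + R * a0) * c + (2 * s * a0 * b0) * n
      + (p1 - 2 * s * a2 - 2 * a0 * a1))
    = - a0 * a1 * (c * c + n * n) * (s * s - 2) - 2 * a0 * a1 * (n * n + c * c - 1)"
    by (simp add: algebra_simps power2_eq_square power3_eq_cube)
  also have "\<dots> = 0"
    by (simp add: s nc)
  finally show ?thesis
    by simp
qed

locale kf_expansion =
  fixes T :: "real set" and r Rb eb :: "real \<Rightarrow> real" and u v p :: "nat \<Rightarrow> fld"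
  assumes open_T: "open T" and hierarchy: "kf_hierarchy T r Rb eb u v p"
begin

lemma smooth: "smooth3 T (u j)" "smooth3 T (v j)" "smooth3 T (p j)"
  using hierarchy unfolding kf_hierarchy_def by auto

lemma periodic:
  "t \<in> T \<Longrightarrow> u j x (y + 2 * pi) t = u j x y t"
  "t \<in> T \<Longrightarrow> v j x (y + 2 * pi) t = v j x y t"
  "t \<in> T \<Longrightarrow> p j x (y + 2 * pi) t = p j x y t"
  using hierarchy unfolding kf_hierarchy_def by auto

lemma u_mean_zero: "t \<in> T \<Longrightarrow> integral {-pi..pi} (\<lambda>y. u j x y t) = 0"
  using hierarchy unfolding kf_hierarchy_def by auto

lemma continuity_eq: "t \<in> T \<Longrightarrow> Dy (v j) x y t = - Dx (lag u j 1) x y t"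
  using hierarchy unfolding kf_hierarchy_def by blast

lemma momentum_eq: "t \<in> T \<Longrightarrow> Dy (Dy (u j)) x y t =
      sqrt 2 * cos y * v j x y t
    + sqrt 2 * sin y * Dx (lag u j 1) x y t
    + (\<Sum>k<j. v k x y t * Dy (u (j - 1 - k)) x y t)
    + (\<Sum>k<j - 1. u k x y t * Dx (u (j - 2 - k)) x y t)
    - Dx (Dx (lag u j 2)) x y t
    + Dx (lag p j 2) x y t
    + Rb t * lag v j 2 x y t * cos y
    + Rb t * sin y * Dx (lag u j 3) x y t
    + (Dt (lag u j 4) x y t + lag u j 4 x y t * (deriv r t / r t))
    + (if j = 5 then eb t * sin y else 0)"
  using hierarchy unfolding kf_hierarchy_def by blast

lemma pressure_eq: "t \<in> T \<Longrightarrow> Dy (p j) x y t =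
      - Dy (Dx (u j)) x y t
    - sqrt 2 * sin y * Dx (v j) x y t
    - (\<Sum>k\<le>j. v k x y t * Dy (v (j - k)) x y t)
    + (- (\<Sum>k<j. u k x y t * Dx (v (j - 1 - k)) x y t) + Dx (Dx (lag v j 1)) x y t)
    - Rb t * sin y * Dx (lag v j 2) x y t
    - (Dt (lag v j 3) x y t + lag v j 3 x y t * (deriv r t / r t))"
  using hierarchy unfolding kf_hierarchy_def by blast

lemma continuity_eq_0: "t \<in> T \<Longrightarrow> Dy (v 0) x y t = 0"
  using continuity_eq[of t 0] by simp

lemma continuity_eq_Suc: "t \<in> T \<Longrightarrow> Dy (v (Suc j)) x y t = - Dx (u j) x y t"
  using continuity_eq[of t "Suc j"] by simp

lemma momentum_eq_0: "t \<in> T \<Longrightarrow> Dy (Dy (u 0)) x y t = sqrt 2 * cos y * v 0 x y t"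
  using momentum_eq[of t 0] by simp

lemma momentum_eq_1: "t \<in> T \<Longrightarrow> Dy (Dy (u 1)) x y t = sqrt 2 * cos y * v 1 x y t
    + sqrt 2 * sin y * Dx (u 0) x y t + v 0 x y t * Dy (u 0) x y t"
  using momentum_eq[of t 1] by simp

lemma momentum_eq_2: "t \<in> T \<Longrightarrow> Dy (Dy (u 2)) x y t = sqrt 2 * cos y * v 2 x y t
    + sqrt 2 * sin y * Dx (u 1) x y t + (v 0 x y t * Dy (u 1) x y t + v 1 x y t * Dy (u 0) x y t)
    + u 0 x y t * Dx (u 0) x y t - Dx (Dx (u 0)) x y t + Dx (p 0) x y t + Rb t * v 0 x y t * cos y"
  using momentum_eq[of t 2] by (simp add: numeral_2_eq_2)

lemma pressure_eq_0: "t \<in> T \<Longrightarrow> Dy (p 0) x y t =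
    - Dy (Dx (u 0)) x y t - sqrt 2 * sin y * Dx (v 0) x y t - v 0 x y t * Dy (v 0) x y t"
  using pressure_eq[of t 0] by simp

lemma pressure_eq_3: "t \<in> T \<Longrightarrow> Dy (p 3) x y t =
      - Dy (Dx (u 3)) x y t
    - sqrt 2 * sin y * Dx (v 3) x y t
    - (v 0 x y t * Dy (v 3) x y t + v 1 x y t * Dy (v 2) x y t
       + v 2 x y t * Dy (v 1) x y t + v 3 x y t * Dy (v 0) x y t)
    + (- (u 0 x y t * Dx (v 2) x y t + u 1 x y t * Dx (v 1) x y t + u 2 x y t * Dx (v 0) x y t)
       + Dx (Dx (v 2)) x y t)
    - Rb t * sin y * Dx (v 1) x y t
    - (Dt (v 0) x y t + v 0 x y t * (deriv r t / r t))"
  using pressure_eq[of t 3] by (simp add: eval_nat_numeral)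

lemma v0_independent_of_y: "t \<in> T \<Longrightarrow> v 0 x y t = v 0 x 0 t"
  using smooth3_DERIV_Dy[OF smooth(2)[of 0], of t "[]" x] continuity_eq_0 DERIV_isconst_all
  by (metis iterD.simps(1))

lemma Dt_v0_independent_of_y:
  assumes "t \<in> T"
  shows "Dt (v 0) x y t = Dt (v 0) x 0 t"
proof -
  have "((\<lambda>\<tau>. v 0 x 0 \<tau>) has_real_derivative Dt (v 0) x 0 t) (at t)"
    using smooth3_DERIV_Dt[OF smooth(2)[of 0] assms, of "[]" x 0] by simp
  then have "((\<lambda>\<tau>. v 0 x y \<tau>) has_real_derivative Dt (v 0) x 0 t) (at t)"
    by (rule has_field_derivative_transform_within_open[OF _ open_T assms])
      (metis v0_independent_of_y)
  then show ?thesis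
    by (simp add: Dt_def DERIV_imp_deriv)
qed

lemma u_from_momentum:
  assumes "t \<in> T" and Dyy_u: "\<And>\<eta>. Dy (Dy (u j)) x \<eta> t = a * cos \<eta> + b * sin \<eta> + c"
  shows "u j x y t = - a * cos y - b * sin y"
proof (rule periodic_mean_zero_second_primitive_trig)
  show u': "((\<lambda>\<eta>. u j x \<eta> t) has_real_derivative Dy (u j) x \<eta> t) (at \<eta>)" for \<eta>
    using smooth3_DERIV_Dy[OF smooth(1)[of j] assms(1), of "[]" x] by simp
  show "((\<lambda>\<eta>. Dy (u j) x \<eta> t) has_real_derivative a * cos \<eta> + b * sin \<eta> + c) (at \<eta>)" for \<eta>
    using smooth3_DERIV_Dy[OF smooth(1)[of j] assms(1), of "[1]" x] Dyy_u by simp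
  show "u j x (y + 2 * pi) t = u j x y t" for y
    using periodic(1)[OF assms(1)] .
  have "continuous_on {-pi..pi} (\<lambda>\<eta>. u j x \<eta> t)"
    using u' DERIV_continuous continuous_at_imp_continuous_on by blast
  then show "((\<lambda>\<eta>. u j x \<eta> t) has_integral 0) {-pi..pi}"
    using integrable_integral[OF integrable_continuous_real] u_mean_zero[OF assms(1)] by metis
qed

context
  fixes t assumes t: "t \<in> T"
begin

text \<open>amp n is the n-th x-derivative of the amplitude A = v 0; V1, V2, V3 and P0 are the
  corresponding traces on y = 0 of the higher orders, which the equations leave undetermined.\<close>
abbreviation "amp \<equiv> x_tower (v 0) t"
abbreviation "V1 \<equiv> x_tower (v 1) t"
abbreviation "V2 \<equiv> x_tower (v 2) t"
abbreviation "V3 \<equiv> x_tower (v 3) t"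
abbreviation "P0 \<equiv> x_tower (p 0) t"

lemma x_tower_v_DERIV:
  "(x_tower (v j) t n has_real_derivative x_tower (v j) t (Suc n) x) (at x within S)"
  using x_tower_DERIV[OF smooth(2) t] .

lemma x_tower_p_DERIV:
  "(x_tower (p j) t n has_real_derivative x_tower (p j) t (Suc n) x) (at x within S)"
  using x_tower_DERIV[OF smooth(3) t] .

lemmas tower_DERIV = x_tower_v_DERIV x_tower_p_DERIV

lemma v0_eq: "v 0 x y t = amp 0 x"
  using v0_independent_of_y[OF t] x_tower_0[of "v 0" t x] by simp

lemma Dy_v0: "Dy (v 0) x y t = 0"
  using continuity_eq_0[OF t] .

lemma Dx_v0: "Dx (v 0) x y t = amp 1 x"
  by (rule Dx_eqI[where F = "amp 0"], rule v0_eq)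
    (auto intro!: derivative_eq_intros tower_DERIV simp: eval_nat_numeral)

lemma u0_eq: "u 0 x y t = - sqrt 2 * amp 0 x * cos y"
  using u_from_momentum[OF t, of 0 x "sqrt 2 * amp 0 x" 0 0 y] momentum_eq_0[OF t] v0_eq
  by (simp add: algebra_simps)

lemma Dy_u0: "Dy (u 0) x y t = sqrt 2 * amp 0 x * sin y"
  by (rule Dy_eqI[where F = "\<lambda>\<eta>. - sqrt 2 * amp 0 x * cos \<eta>"], rule u0_eq)
    (auto intro!: derivative_eq_intros)

lemma Dx_u0: "Dx (u 0) x y t = - sqrt 2 * amp 1 x * cos y"
  by (rule Dx_eqI[where F = "\<lambda>\<xi>. - sqrt 2 * amp 0 \<xi> * cos y"], rule u0_eq)
    (auto intro!: derivative_eq_intros tower_DERIV simp: eval_nat_numeral)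

lemma Dx_Dx_u0: "Dx (Dx (u 0)) x y t = - sqrt 2 * amp 2 x * cos y"
  by (rule Dx_eqI[where F = "\<lambda>\<xi>. - sqrt 2 * amp 1 \<xi> * cos y"], rule Dx_u0)
    (auto intro!: derivative_eq_intros tower_DERIV simp: eval_nat_numeral)

lemma Dy_Dx_u0: "Dy (Dx (u 0)) x y t = sqrt 2 * amp 1 x * sin y"
  by (rule Dy_eqI[where F = "\<lambda>\<eta>. - sqrt 2 * amp 1 x * cos \<eta>"], rule Dx_u0)
    (auto intro!: derivative_eq_intros)

lemma Dy_v1: "Dy (v 1) x y t = sqrt 2 * amp 1 x * cos y"
  using continuity_eq_Suc[OF t, of 0] Dx_u0 by simp

lemma v1_eq: "v 1 x y t = sqrt 2 * amp 1 x * sin y + V1 0 x"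
proof -
  have "Dy (v 1) x \<eta> t = sqrt 2 * amp 1 x * cos \<eta> + 0 * sin \<eta> + 0" for \<eta>
    using Dy_v1 by simp
  from periodic_field_from_Dy[OF smooth(2) t periodic(2)[OF t] this, of y] show ?thesis
    by (simp add: x_tower_0)
qed

lemma Dx_v1: "Dx (v 1) x y t = sqrt 2 * amp 2 x * sin y + V1 1 x"
  by (rule Dx_eqI[where F = "\<lambda>\<xi>. sqrt 2 * amp 1 \<xi> * sin y + V1 0 \<xi>"], rule v1_eq)
    (auto intro!: derivative_eq_intros tower_DERIV simp: eval_nat_numeral)

lemma p0_eq: "p 0 x y t = 2 * sqrt 2 * amp 1 x * cos y + (P0 0 x - 2 * sqrt 2 * amp 1 x)"
proof -
  have "Dy (p 0) x \<eta> t = 0 * cos \<eta> + (- 2 * sqrt 2 * amp 1 x) * sin \<eta> + 0" for \<eta>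
    using pressure_eq_0[OF t, of x \<eta>] Dy_Dx_u0 Dx_v0 Dy_v0 by simp
  from periodic_field_from_Dy[OF smooth(3) t periodic(3)[OF t] this, of y] show ?thesis
    by (simp add: x_tower_0)
qed

lemma Dx_p0: "Dx (p 0) x y t = 2 * sqrt 2 * amp 2 x * cos y + (P0 1 x - 2 * sqrt 2 * amp 2 x)"
  by (rule Dx_eqI[where F = "\<lambda>\<xi>. 2 * sqrt 2 * amp 1 \<xi> * cos y + (P0 0 \<xi> - 2 * sqrt 2 * amp 1 \<xi>)"],
      rule p0_eq) (auto intro!: derivative_eq_intros tower_DERIV simp: eval_nat_numeral)

lemma u1_eq: "u 1 x y t = - sqrt 2 * V1 0 x * cos y - sqrt 2 * (amp 0 x)\<^sup>2 * sin y"
proof -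
  have "Dy (Dy (u 1)) x \<eta> t = sqrt 2 * V1 0 x * cos \<eta> + sqrt 2 * (amp 0 x)\<^sup>2 * sin \<eta> + 0" for \<eta>
    using momentum_eq_1[OF t, of x \<eta>] unfolding v1_eq Dx_u0 v0_eq Dy_u0
    using sqrt2_sqrt2 by (simp add: algebra_simps power2_eq_square)
  from u_from_momentum[OF t this] show ?thesis
    by simp
qed

lemma Dx_u1: "Dx (u 1) x y t = - sqrt 2 * V1 1 x * cos y - 2 * sqrt 2 * amp 0 x * amp 1 x * sin y"
  by (rule Dx_eqI[where F = "\<lambda>\<xi>. - sqrt 2 * V1 0 \<xi> * cos y - sqrt 2 * (amp 0 \<xi>)\<^sup>2 * sin y"],
      rule u1_eq) (auto intro!: derivative_eq_intros tower_DERIV simp: eval_nat_numeral)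

lemma Dy_u1: "Dy (u 1) x y t = sqrt 2 * V1 0 x * sin y - sqrt 2 * (amp 0 x)\<^sup>2 * cos y"
  by (rule Dy_eqI[where F = "\<lambda>\<eta>. - sqrt 2 * V1 0 x * cos \<eta> - sqrt 2 * (amp 0 x)\<^sup>2 * sin \<eta>"],
      rule u1_eq) (auto intro!: derivative_eq_intros)

definition v2_mean :: "real \<Rightarrow> real" where
  "v2_mean \<xi> = V2 0 \<xi> + 2 * sqrt 2 * amp 0 \<xi> * amp 1 \<xi>"
definition v2_mean_dx :: "real \<Rightarrow> real" where
  "v2_mean_dx \<xi> = V2 1 \<xi> + 2 * sqrt 2 * (amp 1 \<xi> * amp 1 \<xi> + amp 0 \<xi> * amp 2 \<xi>)"
definition v2_mean_dxx :: "real \<Rightarrow> real" where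
  "v2_mean_dxx \<xi> = V2 2 \<xi> + 2 * sqrt 2 * (3 * amp 1 \<xi> * amp 2 \<xi> + amp 0 \<xi> * amp 3 \<xi>)"

lemma v2_mean_DERIV: "(v2_mean has_real_derivative v2_mean_dx x) (at x within S)"
  unfolding v2_mean_def[abs_def] v2_mean_dx_def
  by (auto intro!: derivative_eq_intros tower_DERIV simp: eval_nat_numeral algebra_simps)

lemma v2_mean_dx_DERIV: "(v2_mean_dx has_real_derivative v2_mean_dxx x) (at x within S)"
  unfolding v2_mean_dx_def[abs_def] v2_mean_dxx_def
  by (auto intro!: derivative_eq_intros tower_DERIV simp: eval_nat_numeral algebra_simps)

lemma Dy_v2: "Dy (v 2) x y t = sqrt 2 * V1 1 x * cos y + 2 * sqrt 2 * amp 0 x * amp 1 x * sin y"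
  using continuity_eq_Suc[OF t, of 1] Dx_u1 by (simp add: numeral_2_eq_2)

lemma v2_eq: "v 2 x y t = sqrt 2 * V1 1 x * sin y - 2 * sqrt 2 * amp 0 x * amp 1 x * cos y + v2_mean x"
proof -
  have "Dy (v 2) x \<eta> t = sqrt 2 * V1 1 x * cos \<eta> + (2 * sqrt 2 * amp 0 x * amp 1 x) * sin \<eta> + 0" for \<eta>
    using Dy_v2 by simp
  from periodic_field_from_Dy[OF smooth(2) t periodic(2)[OF t] this, of y] show ?thesis
    by (simp add: x_tower_0 v2_mean_def)
qed

lemma Dx_v2: "Dx (v 2) x y t =
    sqrt 2 * V1 2 x * sin y - 2 * sqrt 2 * (amp 1 x * amp 1 x + amp 0 x * amp 2 x) * cos y + v2_mean_dx x"
  by (rule Dx_eqI[where F = "\<lambda>\<xi>. sqrt 2 * V1 1 \<xi> * sin y - 2 * sqrt 2 * amp 0 \<xi> * amp 1 \<xi> * cos y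
        + v2_mean \<xi>"], rule v2_eq)
    (auto intro!: derivative_eq_intros tower_DERIV v2_mean_DERIV simp: eval_nat_numeral algebra_simps)

lemma Dx_Dx_v2: "Dx (Dx (v 2)) x y t =
    sqrt 2 * V1 3 x * sin y - 2 * sqrt 2 * (3 * amp 1 x * amp 2 x + amp 0 x * amp 3 x) * cos y
    + v2_mean_dxx x"
  by (rule Dx_eqI[where F = "\<lambda>\<xi>. sqrt 2 * V1 2 \<xi> * sin y
        - 2 * sqrt 2 * (amp 1 \<xi> * amp 1 \<xi> + amp 0 \<xi> * amp 2 \<xi>) * cos y + v2_mean_dx \<xi>"], rule Dx_v2)
    (auto intro!: derivative_eq_intros tower_DERIV v2_mean_dx_DERIV simp: eval_nat_numeral algebra_simps)

definition u2_cos :: "real \<Rightarrow> real" where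
  "u2_cos \<xi> = sqrt 2 * v2_mean \<xi> - sqrt 2 * amp 0 \<xi> ^ 3 + 3 * sqrt 2 * amp 2 \<xi> + Rb t * amp 0 \<xi>"

lemma u2_eq: "u 2 x y t = - u2_cos x * cos y - 2 * sqrt 2 * amp 0 x * V1 0 x * sin y"
proof -
  have "Dy (Dy (u 2)) x \<eta> t = u2_cos x * cos \<eta> + (2 * sqrt 2 * amp 0 x * V1 0 x) * sin \<eta>
      + (P0 1 x - 2 * sqrt 2 * amp 2 x - 2 * amp 0 x * amp 1 x)" for \<eta>
  proof -
    have "Dy (Dy (u 2)) x \<eta> t =
        sqrt 2 * cos \<eta> * (sqrt 2 * V1 1 x * sin \<eta> - 2 * sqrt 2 * amp 0 x * amp 1 x * cos \<eta> + v2_mean x)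
      + sqrt 2 * sin \<eta> * (- sqrt 2 * V1 1 x * cos \<eta> - 2 * sqrt 2 * amp 0 x * amp 1 x * sin \<eta>)
      + (amp 0 x * (sqrt 2 * V1 0 x * sin \<eta> - sqrt 2 * (amp 0 x)\<^sup>2 * cos \<eta>)
         + (sqrt 2 * amp 1 x * sin \<eta> + V1 0 x) * (sqrt 2 * amp 0 x * sin \<eta>))
      + (- sqrt 2 * amp 0 x * cos \<eta>) * (- sqrt 2 * amp 1 x * cos \<eta>)
      - (- sqrt 2 * amp 2 x * cos \<eta>)
      + (2 * sqrt 2 * amp 2 x * cos \<eta> + (P0 1 x - 2 * sqrt 2 * amp 2 x))
      + Rb t * amp 0 x * cos \<eta>"
      using momentum_eq_2[OF t, of x \<eta>]
      unfolding v2_eq Dx_u1 v0_eq Dy_u1 v1_eq Dy_u0 u0_eq Dx_u0 Dx_Dx_u0 Dx_p0 .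
    also have "\<dots> = u2_cos x * cos \<eta> + (2 * sqrt 2 * amp 0 x * V1 0 x) * sin \<eta>
      + (P0 1 x - 2 * sqrt 2 * amp 2 x - 2 * amp 0 x * amp 1 x)"
      unfolding u2_cos_def
      by (rule u2_momentum_identity[OF sqrt2_sqrt2])
        (simp add: power2_eq_square flip: sin_cos_squared_add[of \<eta>])
    finally show ?thesis .
  qed
  from u_from_momentum[OF t this] show ?thesis
    by simp
qed

definition u2_cos_dx :: "real \<Rightarrow> real" where
  "u2_cos_dx \<xi> = sqrt 2 * v2_mean_dx \<xi> - 3 * sqrt 2 * amp 0 \<xi> ^ 2 * amp 1 \<xi>
  + 3 * sqrt 2 * amp 3 \<xi> + Rb t * amp 1 \<xi>"
definition u2_cos_dxx :: "real \<Rightarrow> real" where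
  "u2_cos_dxx \<xi> = sqrt 2 * v2_mean_dxx \<xi>
  - 3 * sqrt 2 * (2 * amp 0 \<xi> * amp 1 \<xi> ^ 2 + amp 0 \<xi> ^ 2 * amp 2 \<xi>)
  + 3 * sqrt 2 * amp 4 \<xi> + Rb t * amp 2 \<xi>"
definition AV1_dx :: "real \<Rightarrow> real" where
  "AV1_dx \<xi> = amp 1 \<xi> * V1 0 \<xi> + amp 0 \<xi> * V1 1 \<xi>"
definition AV1_dxx :: "real \<Rightarrow> real" where
  "AV1_dxx \<xi> = amp 2 \<xi> * V1 0 \<xi> + 2 * amp 1 \<xi> * V1 1 \<xi> + amp 0 \<xi> * V1 2 \<xi>"
definition v3_mean :: "real \<Rightarrow> real" where
  "v3_mean \<xi> = V3 0 \<xi> + 2 * sqrt 2 * AV1_dx \<xi>"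
definition v3_mean_dx :: "real \<Rightarrow> real" where
  "v3_mean_dx \<xi> = V3 1 \<xi> + 2 * sqrt 2 * AV1_dxx \<xi>"

lemma u2_cos_DERIV: "(u2_cos has_real_derivative u2_cos_dx x) (at x within S)"
  unfolding u2_cos_def[abs_def] u2_cos_dx_def
  by (auto intro!: derivative_eq_intros tower_DERIV v2_mean_DERIV
      simp: eval_nat_numeral algebra_simps power2_eq_square)

lemma u2_cos_dx_DERIV: "(u2_cos_dx has_real_derivative u2_cos_dxx x) (at x within S)"
  unfolding u2_cos_dx_def[abs_def] u2_cos_dxx_def
  by (auto intro!: derivative_eq_intros tower_DERIV v2_mean_dx_DERIV
      simp: eval_nat_numeral algebra_simps power2_eq_square)

lemma AV1_dx_DERIV: "(AV1_dx has_real_derivative AV1_dxx x) (at x within S)"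
  unfolding AV1_dx_def[abs_def] AV1_dxx_def
  by (auto intro!: derivative_eq_intros tower_DERIV simp: eval_nat_numeral algebra_simps)

lemma v3_mean_DERIV: "(v3_mean has_real_derivative v3_mean_dx x) (at x within S)"
  unfolding v3_mean_def[abs_def] v3_mean_dx_def
  by (auto intro!: derivative_eq_intros tower_DERIV AV1_dx_DERIV simp: eval_nat_numeral)

lemma Dx_u2: "Dx (u 2) x y t = - u2_cos_dx x * cos y - 2 * sqrt 2 * AV1_dx x * sin y"
  by (rule Dx_eqI[where F = "\<lambda>\<xi>. - u2_cos \<xi> * cos y - 2 * sqrt 2 * amp 0 \<xi> * V1 0 \<xi> * sin y"],
      rule u2_eq)
    (auto intro!: derivative_eq_intros tower_DERIV u2_cos_DERIV
      simp: AV1_dx_def eval_nat_numeral algebra_simps)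

lemma Dy_v3: "Dy (v 3) x y t = u2_cos_dx x * cos y + 2 * sqrt 2 * AV1_dx x * sin y"
  using continuity_eq_Suc[OF t, of 2] Dx_u2 by (simp add: numeral_3_eq_3)

lemma v3_eq: "v 3 x y t = u2_cos_dx x * sin y - 2 * sqrt 2 * AV1_dx x * cos y + v3_mean x"
proof -
  have "Dy (v 3) x \<eta> t = u2_cos_dx x * cos \<eta> + (2 * sqrt 2 * AV1_dx x) * sin \<eta> + 0" for \<eta>
    using Dy_v3 by simp
  from periodic_field_from_Dy[OF smooth(2) t periodic(2)[OF t] this, of y] show ?thesis
    by (simp add: x_tower_0 v3_mean_def)
qed

lemma Dx_v3: "Dx (v 3) x y t = u2_cos_dxx x * sin y - 2 * sqrt 2 * AV1_dxx x * cos y + v3_mean_dx x"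
  by (rule Dx_eqI[where F = "\<lambda>\<xi>. u2_cos_dx \<xi> * sin y - 2 * sqrt 2 * AV1_dx \<xi> * cos y + v3_mean \<xi>"],
      rule v3_eq)
    (auto intro!: derivative_eq_intros u2_cos_dx_DERIV AV1_dx_DERIV v3_mean_DERIV
      simp: algebra_simps)

text \<open>Periodicity of p 3 forces the y-mean of the right-hand side of its equation to vanish.
  The term - Dy (Dx (u 3)) is itself a y-derivative; the rest is a trigonometric quadratic in y,
  whose mean is computed exactly by the four-point rule.\<close>
lemma solvability_condition:
  "Dt (v 0) x 0 t = - (deriv r t / r t) * amp 0 x - 3 * amp 4 x - sqrt 2 * Rb t * amp 2 x
     + 2 / 3 * (6 * amp 0 x * (amp 1 x)\<^sup>2 + 3 * (amp 0 x)\<^sup>2 * amp 2 x)"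
proof -
  define \<rho> where "\<rho> = deriv r t / r t"
  define R where "R \<eta> =
      - sqrt 2 * sin \<eta> * (u2_cos_dxx x * sin \<eta> - 2 * sqrt 2 * AV1_dxx x * cos \<eta> + v3_mean_dx x)
    - (amp 0 x * (u2_cos_dx x * cos \<eta> + 2 * sqrt 2 * AV1_dx x * sin \<eta>)
       + (sqrt 2 * amp 1 x * sin \<eta> + V1 0 x)
         * (sqrt 2 * V1 1 x * cos \<eta> + 2 * sqrt 2 * amp 0 x * amp 1 x * sin \<eta>)
       + (sqrt 2 * V1 1 x * sin \<eta> - 2 * sqrt 2 * amp 0 x * amp 1 x * cos \<eta> + v2_mean x)
         * (sqrt 2 * amp 1 x * cos \<eta>)
       + (u2_cos_dx x * sin \<eta> - 2 * sqrt 2 * AV1_dx x * cos \<eta> + v3_mean x) * 0)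
    + (- ((- sqrt 2 * amp 0 x * cos \<eta>)
          * (sqrt 2 * V1 2 x * sin \<eta> - 2 * sqrt 2 * (amp 1 x * amp 1 x + amp 0 x * amp 2 x) * cos \<eta>
             + v2_mean_dx x)
         + (- sqrt 2 * V1 0 x * cos \<eta> - sqrt 2 * (amp 0 x)\<^sup>2 * sin \<eta>) * (sqrt 2 * amp 2 x * sin \<eta> + V1 1 x)
         + (- u2_cos x * cos \<eta> - 2 * sqrt 2 * amp 0 x * V1 0 x * sin \<eta>) * amp 1 x)
       + (sqrt 2 * V1 3 x * sin \<eta> - 2 * sqrt 2 * (3 * amp 1 x * amp 2 x + amp 0 x * amp 3 x) * cos \<eta>
          + v2_mean_dxx x))
    - Rb t * sin \<eta> * (sqrt 2 * amp 2 x * sin \<eta> + V1 1 x)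
    - (Dt (v 0) x 0 t + amp 0 x * \<rho>)" for \<eta>
  define q where "q \<eta> = p 3 x \<eta> t + Dx (u 3) x \<eta> t" for \<eta>
  have q': "(q has_real_derivative R \<eta>) (at \<eta>)" for \<eta>
  proof -
    have "(q has_real_derivative Dy (p 3) x \<eta> t + Dy (Dx (u 3)) x \<eta> t) (at \<eta>)"
      unfolding q_def[abs_def]
      using smooth3_DERIV_Dy[OF smooth(3)[of 3] t, of "[]" x \<eta>]
        smooth3_DERIV_Dy[OF smooth(1)[of 3] t, of "[0]" x \<eta>]
      by (auto intro!: derivative_eq_intros)
    moreover have "Dy (p 3) x \<eta> t + Dy (Dx (u 3)) x \<eta> t = R \<eta>"
      using pressure_eq_3[OF t, of x \<eta>]
      unfolding R_def Dx_v3 v0_eq Dy_v3 v1_eq Dy_v2 v2_eq Dy_v1 v3_eq Dy_v0 u0_eq Dx_v2 u1_eq Dx_v1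
        u2_eq Dx_v0 Dx_Dx_v2 Dt_v0_independent_of_y[OF t, of x \<eta>] \<rho>_def[symmetric]
      by linarith
    ultimately show ?thesis
      by simp
  qed
  have "q pi = q (- pi)"
    using periodic(3)[OF t, of 3 x "- pi"] periodic(1)[OF t, of 3 _ "- pi"]
    by (simp add: q_def Dx_def)
  then have "(R has_integral 0) {-pi..pi}"
    using has_integral_DERIV_real[of "- pi" pi q R] q' by simp
  moreover have "trig_quadratic R"
    unfolding R_def by (intro trig_quadratic_intros)
  ultimately have "pi / 2 * (R 0 + R pi + R (pi / 2) + R (- pi / 2)) = 0"
    using trig_quadratic_has_integral has_integral_unique by blast
  then have "R 0 + R pi + R (pi / 2) + R (- pi / 2) = 0"
    by simp
  moreover have "sin (- pi / 2) = - 1" "cos (- pi / 2) = 0"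
    by (simp_all add: minus_divide_left[symmetric])
  ultimately show ?thesis
    unfolding \<rho>_def[symmetric] R_def u2_cos_dxx_def u2_cos_dx_def u2_cos_def
      v2_mean_dxx_def v2_mean_dx_def v2_mean_def AV1_dxx_def AV1_dx_def v3_mean_dx_def v3_mean_def
    by (simp add: algebra_simps power2_eq_square power3_eq_cube sqrt2_sqrt2_mult)
qed

end

lemma amplitude_equation:
  assumes t: "t \<in> T"
  shows "deriv (\<lambda>\<tau>. v 0 x 0 \<tau>) t =
      - (deriv r t / r t) * v 0 x 0 t
    - 3 * (deriv ^^ 4) (\<lambda>\<xi>. v 0 \<xi> 0 t) x
    - sqrt 2 * Rb t * (deriv ^^ 2) (\<lambda>\<xi>. v 0 \<xi> 0 t) x
    + 2 / 3 * (deriv ^^ 2) (\<lambda>\<xi>. (v 0 \<xi> 0 t) ^ 3) x"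
proof -
  have A: "(\<lambda>\<xi>. v 0 \<xi> 0 t) = x_tower (v 0) t 0"
    by (simp add: x_tower_0 fun_eq_iff)
  have "(x_tower (v 0) t 0 has_real_derivative x_tower (v 0) t 1 \<xi>) (at \<xi>)"
    "(x_tower (v 0) t 1 has_real_derivative x_tower (v 0) t 2 \<xi>) (at \<xi>)" for \<xi>
    using x_tower_v_DERIV[OF t] by (simp_all add: numeral_2_eq_2)
  from funpow2_deriv_cube[OF this] have cube: "(deriv ^^ 2) (\<lambda>\<xi>. (v 0 \<xi> 0 t) ^ 3) x
      = 6 * x_tower (v 0) t 0 x * (x_tower (v 0) t 1 x)\<^sup>2
        + 3 * (x_tower (v 0) t 0 x)\<^sup>2 * x_tower (v 0) t 2 x"
    by (simp only: x_tower_0)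
  have "deriv (\<lambda>\<tau>. v 0 x 0 \<tau>) t = Dt (v 0) x 0 t"
    by (simp add: Dt_def)
  moreover have "v 0 x 0 t = x_tower (v 0) t 0 x"
    by (simp add: x_tower_0)
  ultimately show ?thesis
    unfolding cube A funpow_deriv_x_tower using solvability_condition[OF t, of x] by simp
qed

lemma leading_order_v0: "leading_order T u v (\<lambda>x t. v 0 x 0 t)"
proof (unfold leading_order_def, intro allI impI conjI)
  fix x y t assume t: "t \<in> T"
  show "v 0 x y t = v 0 x 0 t"
    using v0_independent_of_y[OF t] .
  show "u 0 x y t = - sqrt 2 * cos y * v 0 x 0 t"
    using u0_eq[OF t, of x y] x_tower_0[of "v 0" t x] by simp
qed

end

lemma kf_hierarchy_amplitude_equation:
  assumes "open T" "kf_hierarchy T r Rb eb u v p"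
    and rate: "\<And>t. t \<in> T \<Longrightarrow> deriv r t / r t = \<rho> t"
  shows "\<exists>A. leading_order T u v A \<and>
    (\<forall>x. \<forall>t\<in>T. deriv (\<lambda>\<tau>. A x \<tau>) t =
        - \<rho> t * A x t
      - 3 * (deriv ^^ 4) (\<lambda>\<xi>. A \<xi> t) x
      - sqrt 2 * Rb t * (deriv ^^ 2) (\<lambda>\<xi>. A \<xi> t) x
      + 2 / 3 * (deriv ^^ 2) (\<lambda>\<xi>. (A \<xi> t) ^ 3) x)"
proof -
  interpret kf_expansion T r Rb eb u v p
    using assms(1,2) by unfold_locales
  show ?thesis
    using leading_order_v0 amplitude_equation rate by auto
qed

section \<open>The charts\<close>

lemma chart_K1:
  assumes "open T" "is_interval T" "0 \<in> T"
    and D: "\<forall>t\<in>T. (r1 has_real_derivative (- 1 / 2 * r1 t * e1 t)) (at t) \<and>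
               (e1 has_real_derivative (3 * (e1 t) ^ 2)) (at t)"
    and H: "kf_hierarchy T r1 (\<lambda>_. - 1) e1 u v p"
  shows "(\<forall>t\<in>T. e1 t = 2 * e1 0 / (2 - 6 * e1 0 * t)) \<and>
      (\<exists>A1. leading_order T u v A1 \<and>
        (\<forall>x. \<forall>t\<in>T. deriv (\<lambda>\<tau>. A1 x \<tau>) t =
            e1 t / 2 * A1 x t
            - 3 * (deriv ^^ 4) (\<lambda>\<xi>. A1 \<xi> t) x
            + sqrt 2 * (deriv ^^ 2) (\<lambda>\<xi>. A1 \<xi> t) x
            + 2 / 3 * (deriv ^^ 2) (\<lambda>\<xi>. (A1 \<xi> t) ^ 3) x))"
proof
  show "\<forall>t\<in>T. e1 t = 2 * e1 0 / (2 - 6 * e1 0 * t)"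
  proof
    fix t assume "t \<in> T"
    with D have "e1 t = e1 0 / (1 - 3 * e1 0 * t)"
      by (intro riccati_solution[OF assms(2,3)]) auto
    moreover have "2 * e1 0 / (2 - 6 * e1 0 * t) = e1 0 / (1 - 3 * e1 0 * t)"
      using mult_divide_mult_cancel_left[of 2 "e1 0" "1 - 3 * e1 0 * t"]
      by (simp add: right_diff_distrib mult.assoc)
    ultimately show "e1 t = 2 * e1 0 / (2 - 6 * e1 0 * t)"
      by simp
  qed
  have "deriv r1 t / r1 t = - e1 t / 2" if "t \<in> T" for t
    using D H that DERIV_imp_deriv unfolding kf_hierarchy_def by (fastforce simp: field_simps)
  from kf_hierarchy_amplitude_equation[OF assms(1) H this]
  show "\<exists>A1. leading_order T u v A1 \<and>
        (\<forall>x. \<forall>t\<in>T. deriv (\<lambda>\<tau>. A1 x \<tau>) t =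
            e1 t / 2 * A1 x t
            - 3 * (deriv ^^ 4) (\<lambda>\<xi>. A1 \<xi> t) x
            + sqrt 2 * (deriv ^^ 2) (\<lambda>\<xi>. A1 \<xi> t) x
            + 2 / 3 * (deriv ^^ 2) (\<lambda>\<xi>. (A1 \<xi> t) ^ 3) x)"
    by simp
qed

lemma chart_K2:
  assumes "open T" "is_interval T" "0 \<in> T"
    and D: "\<forall>t\<in>T. (r2 has_real_derivative 0) (at t) \<and> (R2 has_real_derivative 1) (at t)"
    and H: "kf_hierarchy T r2 R2 (\<lambda>_. 1) u v p"
  shows "(\<forall>t\<in>T. R2 t = R2 0 + t) \<and>
      (\<exists>A2. leading_order T u v A2 \<and>
        (\<forall>x. \<forall>t\<in>T. deriv (\<lambda>\<tau>. A2 x \<tau>) t =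
            - 3 * (deriv ^^ 4) (\<lambda>\<xi>. A2 \<xi> t) x
            - sqrt 2 * R2 t * (deriv ^^ 2) (\<lambda>\<xi>. A2 \<xi> t) x
            + 2 / 3 * (deriv ^^ 2) (\<lambda>\<xi>. (A2 \<xi> t) ^ 3) x))"
proof
  have "(\<lambda>\<tau>. R2 \<tau> - \<tau>) constant_on T"
    using D assms(1,2) is_interval_connected
    by (intro has_field_derivative_0_imp_constant_on) (auto intro!: derivative_eq_intros)
  then show "\<forall>t\<in>T. R2 t = R2 0 + t"
    using assms(3) unfolding constant_on_def by (metis diff_add_cancel diff_zero)
  have "deriv r2 t / r2 t = 0" if "t \<in> T" for t
    using D that DERIV_imp_deriv by fastforce
  from kf_hierarchy_amplitude_equation[OF assms(1) H this]
  show "\<exists>A2. leading_order T u v A2 \<and>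
        (\<forall>x. \<forall>t\<in>T. deriv (\<lambda>\<tau>. A2 x \<tau>) t =
            - 3 * (deriv ^^ 4) (\<lambda>\<xi>. A2 \<xi> t) x
            - sqrt 2 * R2 t * (deriv ^^ 2) (\<lambda>\<xi>. A2 \<xi> t) x
            + 2 / 3 * (deriv ^^ 2) (\<lambda>\<xi>. (A2 \<xi> t) ^ 3) x)"
    by simp
qed

lemma chart_K3:
  assumes "open T" "is_interval T" "0 \<in> T"
    and D: "\<forall>t\<in>T. (r3 has_real_derivative (1 / 2 * r3 t * e3 t)) (at t) \<and>
               (e3 has_real_derivative (- 3 * (e3 t) ^ 2)) (at t)"
    and H: "kf_hierarchy T r3 (\<lambda>_. 1) e3 u v p"
  shows "(\<forall>t\<in>T. e3 t = 2 * e3 0 / (2 + 6 * e3 0 * t)) \<and>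
      (\<exists>A3. leading_order T u v A3 \<and>
        (\<forall>x. \<forall>t\<in>T. deriv (\<lambda>\<tau>. A3 x \<tau>) t =
            - e3 t / 2 * A3 x t
            - 3 * (deriv ^^ 4) (\<lambda>\<xi>. A3 \<xi> t) x
            - sqrt 2 * (deriv ^^ 2) (\<lambda>\<xi>. A3 \<xi> t) x
            + 2 / 3 * (deriv ^^ 2) (\<lambda>\<xi>. (A3 \<xi> t) ^ 3) x))"
proof
  show "\<forall>t\<in>T. e3 t = 2 * e3 0 / (2 + 6 * e3 0 * t)"
  proof
    fix t assume "t \<in> T"
    with D have "e3 t = e3 0 / (1 - (- 3) * e3 0 * t)"
      by (intro riccati_solution[OF assms(2,3)]) auto
    moreover have "2 * e3 0 / (2 + 6 * e3 0 * t) = e3 0 / (1 - (- 3) * e3 0 * t)"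
      using mult_divide_mult_cancel_left[of 2 "e3 0" "1 - (- 3) * e3 0 * t"]
      by (simp add: right_diff_distrib mult.assoc)
    ultimately show "e3 t = 2 * e3 0 / (2 + 6 * e3 0 * t)"
      by simp
  qed
  have "deriv r3 t / r3 t = e3 t / 2" if "t \<in> T" for t
    using D H that DERIV_imp_deriv unfolding kf_hierarchy_def by (fastforce simp: field_simps)
  from kf_hierarchy_amplitude_equation[OF assms(1) H this]
  show "\<exists>A3. leading_order T u v A3 \<and>
        (\<forall>x. \<forall>t\<in>T. deriv (\<lambda>\<tau>. A3 x \<tau>) t =
            - e3 t / 2 * A3 x t
            - 3 * (deriv ^^ 4) (\<lambda>\<xi>. A3 \<xi> t) x
            - sqrt 2 * (deriv ^^ 2) (\<lambda>\<xi>. A3 \<xi> t) x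
            + 2 / 3 * (deriv ^^ 2) (\<lambda>\<xi>. (A3 \<xi> t) ^ 3) x)"
    by simp
qed

theorem theorem5p4:
  shows
  "(\<forall>T r Rb eb u v p. open T \<and> kf_hierarchy T r Rb eb u v p \<longrightarrow>
      (\<exists>A. leading_order T u v A \<and>
        (\<forall>x. \<forall>t\<in>T. deriv (\<lambda>\<tau>. A x \<tau>) t =
            - (deriv r t / r t) * A x t
            - 3 * (deriv ^^ 4) (\<lambda>\<xi>. A \<xi> t) x
            - sqrt 2 * Rb t * (deriv ^^ 2) (\<lambda>\<xi>. A \<xi> t) x
            + 2 / 3 * (deriv ^^ 2) (\<lambda>\<xi>. (A \<xi> t) ^ 3) x)))
   \<and>
   (\<forall>T r1 e1 u v p. open T \<and> is_interval T \<and> 0 \<in> T \<and>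
      (\<forall>t\<in>T. (r1 has_real_derivative (- 1 / 2 * r1 t * e1 t)) (at t) \<and>
               (e1 has_real_derivative (3 * (e1 t) ^ 2)) (at t)) \<and>
      kf_hierarchy T r1 (\<lambda>_. - 1) e1 u v p \<longrightarrow>
      (\<forall>t\<in>T. e1 t = 2 * e1 0 / (2 - 6 * e1 0 * t)) \<and>
      (\<exists>A1. leading_order T u v A1 \<and>
        (\<forall>x. \<forall>t\<in>T. deriv (\<lambda>\<tau>. A1 x \<tau>) t =
            e1 t / 2 * A1 x t
            - 3 * (deriv ^^ 4) (\<lambda>\<xi>. A1 \<xi> t) x
            + sqrt 2 * (deriv ^^ 2) (\<lambda>\<xi>. A1 \<xi> t) x
            + 2 / 3 * (deriv ^^ 2) (\<lambda>\<xi>. (A1 \<xi> t) ^ 3) x)))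
   \<and>
   (\<forall>T r2 R2 u v p. open T \<and> is_interval T \<and> 0 \<in> T \<and>
      (\<forall>t\<in>T. (r2 has_real_derivative 0) (at t) \<and>
               (R2 has_real_derivative 1) (at t)) \<and>
      kf_hierarchy T r2 R2 (\<lambda>_. 1) u v p \<longrightarrow>
      (\<forall>t\<in>T. R2 t = R2 0 + t) \<and>
      (\<exists>A2. leading_order T u v A2 \<and>
        (\<forall>x. \<forall>t\<in>T. deriv (\<lambda>\<tau>. A2 x \<tau>) t =
            - 3 * (deriv ^^ 4) (\<lambda>\<xi>. A2 \<xi> t) x
            - sqrt 2 * R2 t * (deriv ^^ 2) (\<lambda>\<xi>. A2 \<xi> t) x
            + 2 / 3 * (deriv ^^ 2) (\<lambda>\<xi>. (A2 \<xi> t) ^ 3) x)))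
   \<and>
   (\<forall>T r3 e3 u v p. open T \<and> is_interval T \<and> 0 \<in> T \<and>
      (\<forall>t\<in>T. (r3 has_real_derivative (1 / 2 * r3 t * e3 t)) (at t) \<and>
               (e3 has_real_derivative (- 3 * (e3 t) ^ 2)) (at t)) \<and>
      kf_hierarchy T r3 (\<lambda>_. 1) e3 u v p \<longrightarrow>
      (\<forall>t\<in>T. e3 t = 2 * e3 0 / (2 + 6 * e3 0 * t)) \<and>
      (\<exists>A3. leading_order T u v A3 \<and>
        (\<forall>x. \<forall>t\<in>T. deriv (\<lambda>\<tau>. A3 x \<tau>) t =
            - e3 t / 2 * A3 x t
            - 3 * (deriv ^^ 4) (\<lambda>\<xi>. A3 \<xi> t) x
            - sqrt 2 * (deriv ^^ 2) (\<lambda>\<xi>. A3 \<xi> t) x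
            + 2 / 3 * (deriv ^^ 2) (\<lambda>\<xi>. (A3 \<xi> t) ^ 3) x)))"
proof (intro conjI[OF _ conjI[OF _ conjI]] allI impI; elim conjE)
qed (rule kf_hierarchy_amplitude_equation chart_K1 chart_K2 chart_K3; simp)+

end
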